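(* For every $n\ge2$, $$E\big[(U^{(n)}-\tau^{(n)})^2\big]=\frac{4n+2}{n-1}H_{n,2}-\frac{2H_{n,1}^2}{n-1}-\frac{4H_{n,1}}{n-1}.$$
   Context: Fix $n\ge 2$. A Yule tree with speciation rate 1 on $n$ tips: start with a single lineage; each lineage independently splits into two at rate 1; the process is stopped just before the $n$-th speciation event, so the tree has $n$ tips and $n-1$ speciation (internal) nodes, numbered $1,\dots,n-1$ chronologically from the root. For $i=1,\dots,n$ let $T_i$ be the length of the time interval during which there are exactly $i$ lineages; the $T_i$ are independent, $T_i\sim\mathrm{Exp}(i)$ (rate $i$), the $k$-th speciation occurs at time $T_1+\dots+T_k$, and at each speciation the splitting lineage is uniformly chosen among current lineages, independently of the $T_i$. The tree height is $U^{(n)}=T_1+\dots+T_n$. Choose an unordered pair of distinct tips uniformly at random and let $\kappa_n\in\{1,\dots,n-1\}$ be the index of the speciation event at which their lineages split; the coalescent time of the pair is $\tau^{(n)}=T_{\kappa_n+1}+\dots+T_n$. $H_{n,r}=\sum_{i=1}^n i^{-r}$. *)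

theory Defs
  imports "HOL-Probability.Probability"
begin

definition Hnr :: "nat \<Rightarrow> nat \<Rightarrow> real" where
  "Hnr n r = (\<Sum>i=1..n. 1 / real i ^ r)"

text \<open>Yule tree topology on n tips. Lineages are labelled 0,1,2,...
  At speciation event k (k = 1..n-1) there are k lineages 0..k-1; lineage c k
  (uniform in {0..<k}) splits into lineages c k and k. After n-1 events the tips
  are the lineages 0..n-1.\<close>
definition yule_choices :: "nat \<Rightarrow> (nat \<Rightarrow> nat) set" where
  "yule_choices n = (\<Pi>\<^sub>E k\<in>{1..<n}. {..<k})"

definition tip_pairs :: "nat \<Rightarrow> (nat \<times> nat) set" where
  "tip_pairs n = {(a, b). a < b \<and> b < n}"

text \<open>Index of the speciation event at which the lineages of tips a < b split.
  Lineage b was created at event b from lineage c b; if c b = a this is the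
  split, otherwise the ancestor of b before event b is c b.\<close>
function split_event :: "(nat \<Rightarrow> nat) \<Rightarrow> nat \<Rightarrow> nat \<Rightarrow> nat" where
  "split_event c a b =
     (if a < b then
        (if c b = a then b
         else if c b < b then split_event c (min a (c b)) (max a (c b))
         else 0)
      else 0)"
  by pat_completeness auto
termination
  by (relation "Wellfounded.measure (\<lambda>(c, a, b). b)") auto

definition yule_space :: "nat \<Rightarrow> (((nat \<Rightarrow> nat) \<times> (nat \<times> nat)) \<times> (nat \<Rightarrow> real)) measure" where
  "yule_space n =
     measure_pmf (pmf_of_set (yule_choices n \<times> tip_pairs n))
     \<Otimes>\<^sub>M (\<Pi>\<^sub>M i\<in>{1..n}. density lborel (exponential_density (real i)))"

definition yule_height :: "nat \<Rightarrow> (nat \<Rightarrow> real) \<Rightarrow> real" where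
  "yule_height n T = (\<Sum>i=1..n. T i)"

definition coal_time :: "nat \<Rightarrow> nat \<Rightarrow> (nat \<Rightarrow> real) \<Rightarrow> real" where
  "coal_time n \<kappa> T = (\<Sum>i\<in>{\<kappa><..n}. T i)"

end

theory Submission
  imports Defs
begin

(* Given the topology and the sampled pair with split event k, U - tau = T_1 + ... + T_k is a sum
   of independent Exp(i) variables, whose second moment is H_{k,2} + H_{k,1}^2.  It remains to
   average this over all topologies and pairs.  When speciation n splits lineage m, every old pair
   keeps its split event, the new pair (m, n) splits at n, and for a <> m the new pair (a, n) splits
   where (a, m) does; so as m ranges over the n lineages the total over pairs is multiplied by n + 2
   and gains n contributions of the value at n. *)

declare split_event.simps[simp del]

lemma split_event_le: "split_event c a b \<le> b"
  by (induction c a b rule: split_event.induct) (subst split_event.simps; auto simp: max_def)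

lemma split_event_cong:
  "(\<And>i. i \<le> b \<Longrightarrow> c i = c' i) \<Longrightarrow> split_event c a b = split_event c' a b"
  by (induction c a b rule: split_event.induct) (subst (1 2) split_event.simps; auto simp: max_def)

lemma split_event_fun_upd_new:
  assumes "a < n" "m < n"
  shows "split_event (c(n := m)) a n = (if a = m then n else split_event c (min a m) (max a m))"
proof -
  have "split_event (c(n := m)) (min a m) (max a m) = split_event c (min a m) (max a m)"
    using assms by (intro split_event_cong) auto
  then show ?thesis using assms by (subst split_event.simps) auto
qed

lemma finite_tip_pairs: "finite (tip_pairs n)"
  by (rule finite_subset[of _ "{..<n} \<times> {..<n}"]) (auto simp: tip_pairs_def)

lemma sum_tip_pairs_Suc:
  "(\<Sum>p\<in>tip_pairs (Suc n). f p) = (\<Sum>p\<in>tip_pairs n. f p) + (\<Sum>a<n. f (a, n))"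
proof -
  have "tip_pairs (Suc n) = tip_pairs n \<union> (\<lambda>a. (a, n)) ` {..<n}"
    by (auto simp: tip_pairs_def)
  moreover have "tip_pairs n \<inter> (\<lambda>a. (a, n)) ` {..<n} = {}"
    by (auto simp: tip_pairs_def)
  ultimately show ?thesis
    by (simp add: sum.union_disjoint finite_tip_pairs sum.reindex inj_on_def)
qed

lemma card_tip_pairs: "real (card (tip_pairs n)) = real n * (real n - 1) / 2"
proof (induction n)
  case (Suc n)
  have "card (tip_pairs (Suc n)) = card (tip_pairs n) + n"
    using sum_tip_pairs_Suc[of "\<lambda>_. 1::nat"] by simp
  then show ?case using Suc by (simp add: field_simps)
qed (simp add: tip_pairs_def)

lemma sum_offdiagonal_tip_pairs:
  fixes h :: "nat \<Rightarrow> nat \<Rightarrow> 'a::comm_semiring_1"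
  shows "(\<Sum>m<n. \<Sum>a<n. if a = m then x else h (min a m) (max a m))
     = of_nat n * x + 2 * (\<Sum>(a, b)\<in>tip_pairs n. h a b)"
proof (induction n)
  case (Suc n)
  have "(\<Sum>m<n. if n = m then x else h (min n m) (max n m)) = (\<Sum>a<n. h a n)"
       "(\<Sum>a<n. if a = n then x else h (min a n) (max a n)) = (\<Sum>a<n. h a n)"
    by (auto intro!: sum.cong)
  then show ?case
    by (simp add: sum.distrib sum_tip_pairs_Suc Suc algebra_simps mult_2)
qed (simp add: tip_pairs_def)

lemma finite_yule_choices: "finite (yule_choices n)"
  unfolding yule_choices_def by (rule finite_PiE) auto

lemma yule_choices_nonempty: "yule_choices n \<noteq> {}"
  unfolding yule_choices_def by (auto simp: PiE_eq_empty_iff lessThan_empty_iff)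

lemma yule_choices_Suc:
  assumes "n \<ge> 1"
  shows "yule_choices (Suc n) = (\<lambda>(m, c). c(n := m)) ` ({..<n} \<times> yule_choices n)"
    and "inj_on (\<lambda>(m, c). c(n := m)) ({..<n} \<times> yule_choices n)"
proof -
  have "{1..<Suc n} = insert n {1..<n}" using assms by auto
  then show "yule_choices (Suc n) = (\<lambda>(m, c). c(n := m)) ` ({..<n} \<times> yule_choices n)"
    unfolding yule_choices_def by (simp add: PiE_insert_eq)
  show "inj_on (\<lambda>(m, c). c(n := m)) ({..<n} \<times> yule_choices n)"
    unfolding yule_choices_def using inj_combinator[of n "{1..<n}" "\<lambda>k. {..<k}"] by simp
qed

lemma card_yule_choices_Suc:
  "n \<ge> 1 \<Longrightarrow> card (yule_choices (Suc n)) = n * card (yule_choices n)"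
  by (simp add: yule_choices_Suc card_image card_cartesian_product)

definition split_event_sum :: "nat \<Rightarrow> (nat \<Rightarrow> real) \<Rightarrow> real" where
  "split_event_sum n g = (\<Sum>c\<in>yule_choices n. \<Sum>(a, b)\<in>tip_pairs n. g (split_event c a b))"

lemma sum_tip_pairs_fun_upd:
  assumes "m < n"
  shows "(\<Sum>(a, b)\<in>tip_pairs (Suc n). g (split_event (c(n := m)) a b))
       = (\<Sum>(a, b)\<in>tip_pairs n. g (split_event c a b))
         + (\<Sum>a<n. if a = m then g n else g (split_event c (min a m) (max a m)))"
proof -
  have "(\<Sum>(a, b)\<in>tip_pairs n. g (split_event (c(n := m)) a b))
      = (\<Sum>(a, b)\<in>tip_pairs n. g (split_event c a b))"
    by (intro sum.cong refl)
       (auto simp: tip_pairs_def intro!: arg_cong[where f = g] split_event_cong)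
  then show ?thesis
    using assms by (simp add: sum_tip_pairs_Suc split_event_fun_upd_new if_distrib)
qed

lemma split_event_sum_Suc:
  assumes "n \<ge> 1"
  shows "split_event_sum (Suc n) g
       = real (n + 2) * split_event_sum n g + real n * real (card (yule_choices n)) * g n"
proof -
  define S where "S c = (\<Sum>(a, b)\<in>tip_pairs n. g (split_event c a b))" for c
  have "split_event_sum (Suc n) g
      = (\<Sum>(m, c)\<in>{..<n} \<times> yule_choices n.
           \<Sum>(a, b)\<in>tip_pairs (Suc n). g (split_event (c(n := m)) a b))"
    unfolding split_event_sum_def yule_choices_Suc(1)[OF assms]
    by (subst sum.reindex[OF yule_choices_Suc(2)[OF assms]]) (simp add: case_prod_unfold)
  also have "\<dots> = (\<Sum>c\<in>yule_choices n. \<Sum>m<n. S c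
         + (\<Sum>a<n. if a = m then g n else g (split_event c (min a m) (max a m))))"
    by (simp add: sum.cartesian_product[symmetric] sum_tip_pairs_fun_upd S_def
                  sum.swap[of _ "{..<n}"])
  also have "\<dots> = (\<Sum>c\<in>yule_choices n. real (n + 2) * S c + real n * g n)"
  proof (rule sum.cong[OF refl])
    fix c
    show "(\<Sum>m<n. S c + (\<Sum>a<n. if a = m then g n else g (split_event c (min a m) (max a m))))
        = real (n + 2) * S c + real n * g n"
      using sum_offdiagonal_tip_pairs[where h = "\<lambda>a b. g (split_event c a b)"]
      by (simp add: sum.distrib S_def algebra_simps)
  qed
  finally show ?thesis
    by (simp add: split_event_sum_def S_def sum.distrib sum_distrib_left)
qed

lemma Hnr_Suc: "Hnr (Suc n) r = Hnr n r + 1 / real (Suc n) ^ r"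
  unfolding Hnr_def by simp

lemma harmonic_step_identity:
  fixes x C a b :: real
  assumes "x \<ge> 0"
  shows "(x + 2) * (C * x / 2 * ((4 * x + 2) * b - 2 * a\<^sup>2 - 4 * a)) + x * C * (b + a\<^sup>2)
    = x * C * (x + 1) / 2 * ((4 * (x + 1) + 2) * (b + 1 / (x + 1)\<^sup>2)
        - 2 * (a + 1 / (x + 1))\<^sup>2 - 4 * (a + 1 / (x + 1)))"
proof -
  define y where "y = 1 / (x + 1)"
  have "y * (x + 1) = 1" using assms by (simp add: y_def)
  then have "(x + 2) * (C * x / 2 * ((4 * x + 2) * b - 2 * a\<^sup>2 - 4 * a)) + x * C * (b + a\<^sup>2)
    = x * C * (x + 1) / 2 * ((4 * (x + 1) + 2) * (b + y\<^sup>2) - 2 * (a + y)\<^sup>2 - 4 * (a + y))"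
    by algebra
  then show ?thesis by (simp add: y_def power_divide)
qed

lemma split_event_sum_harmonic:
  assumes "n \<ge> 1"
  shows "split_event_sum n (\<lambda>k. Hnr k 2 + (Hnr k 1)\<^sup>2)
       = real (card (yule_choices n)) * real n / 2
         * ((4 * real n + 2) * Hnr n 2 - 2 * (Hnr n 1)\<^sup>2 - 4 * Hnr n 1)"
  using assms
proof (induction n rule: dec_induct)
  case base
  have "tip_pairs 1 = {}" by (auto simp: tip_pairs_def)
  then show ?case by (simp add: split_event_sum_def Hnr_def)
next
  case (step n)
  let ?G = "\<lambda>k. Hnr k 2 + (Hnr k 1)\<^sup>2"
  let ?C = "real (card (yule_choices n))"
  have "split_event_sum (Suc n) ?G = real (n + 2) * split_event_sum n ?G + real n * ?C * ?G n"
    by (rule split_event_sum_Suc) (use step in simp)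
  also have "\<dots> = (real n + 2) * (?C * real n / 2
        * ((4 * real n + 2) * Hnr n 2 - 2 * (Hnr n 1)\<^sup>2 - 4 * Hnr n 1))
      + real n * ?C * (Hnr n 2 + (Hnr n 1)\<^sup>2)"
    unfolding step.IH by simp
  also have "\<dots> = real n * ?C * (real n + 1) / 2
      * ((4 * (real n + 1) + 2) * (Hnr n 2 + 1 / (real n + 1)\<^sup>2)
         - 2 * (Hnr n 1 + 1 / (real n + 1))\<^sup>2 - 4 * (Hnr n 1 + 1 / (real n + 1)))"
    by (rule harmonic_step_identity) simp
  finally show ?case
    using step.hyps by (simp add: card_yule_choices_Suc Hnr_Suc add.commute)
qed

lemma has_bochner_integral_exponential_power:
  assumes "0 < l"
  shows "has_bochner_integral (density lborel (exponential_density l)) (\<lambda>x. x ^ i)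
           (fact i / l ^ i)"
proof (rule has_bochner_integral_density)
  show "has_bochner_integral lborel (\<lambda>x. exponential_density l x *\<^sub>R x ^ i) (fact i / l ^ i)"
    using assms nn_integral_erlang_ith_moment[OF assms, of 0 i]
    by (intro has_bochner_integral_nn_integral) (auto simp: erlang_density_def)
qed (use assms in \<open>auto simp: erlang_density_def\<close>)

lemma sigma_finite_exponential_density:
  "sigma_finite_measure (density lborel (exponential_density l))"
  by (subst sigma_finite_measure.sigma_finite_iff_density_finite[OF sigma_finite_lborel]) auto

interpretation exponential_product:
  product_sigma_finite "\<lambda>i. density lborel (exponential_density (real i))"
  by (simp add: product_sigma_finite_def sigma_finite_exponential_density)

abbreviation yule_intervals :: "nat set \<Rightarrow> (nat \<Rightarrow> real) measure" where
  "yule_intervals I \<equiv> \<Pi>\<^sub>M i\<in>I. density lborel (exponential_density (real i))"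

lemma has_bochner_integral_yule_intervals_monomial:
  assumes "finite I" "0 \<notin> I"
  shows "has_bochner_integral (yule_intervals I) (\<lambda>T. \<Prod>i\<in>I. T i ^ m i)
           (\<Prod>i\<in>I. fact (m i) / real i ^ m i)"
proof -
  have "has_bochner_integral (density lborel (exponential_density (real i))) (\<lambda>x. x ^ m i)
          (fact (m i) / real i ^ m i)" if "i \<in> I" for i
    using that assms by (intro has_bochner_integral_exponential_power) (auto intro: Nat.gr0I)
  then show ?thesis
    unfolding has_bochner_integral_iff
    using exponential_product.product_integrable_prod[OF assms(1), of "\<lambda>i x. x ^ m i"]
      exponential_product.product_integral_prod[OF assms(1), of "\<lambda>i x. x ^ m i"]
    by simp
qed

lemma has_bochner_integral_yule_intervals_mult:
  assumes "finite I" "0 \<notin> I" "i \<in> I" "j \<in> I"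
  shows "has_bochner_integral (yule_intervals I) (\<lambda>T. T i * T j)
           ((if i = j then 2 else 1) / (real i * real j))"
proof -
  \<comment> \<open>write the product as a monomial, whose integral factorises over the coordinates\<close>
  define m :: "nat \<Rightarrow> nat" where "m l = of_bool (l = i) + of_bool (l = j)" for l
  have power_of_bool: "x ^ of_bool P = (if P then x else 1)" for x :: real and P
    by simp
  have "T i * T j = (\<Prod>l\<in>I. T l ^ m l)" for T :: "nat \<Rightarrow> real"
    using assms by (simp add: m_def power_add prod.distrib power_of_bool)
  moreover have "(\<Prod>l\<in>I. fact (m l) / real l ^ m l) = (if i = j then 2 else 1) / (real i * real j)"
  proof (cases "i = j")
    case True
    then have "(\<Prod>l\<in>I. fact (m l) / real l ^ m l)
        = (\<Prod>l\<in>I. if l = i then 2 / (real i * real i) else 1)"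
      by (intro prod.cong) (auto simp: m_def numeral_2_eq_2)
    then show ?thesis using True assms by simp
  next
    case False
    then have "(\<Prod>l\<in>I. fact (m l) / real l ^ m l)
        = (\<Prod>l\<in>I. (if l = i then 1 / real i else 1) * (if l = j then 1 / real j else 1))"
      by (intro prod.cong) (auto simp: m_def)
    then show ?thesis using False assms by (simp add: prod.distrib)
  qed
  ultimately show ?thesis
    using has_bochner_integral_yule_intervals_monomial[OF assms(1,2), of m] by simp
qed

lemma has_bochner_integral_yule_intervals_sum_square:
  assumes "finite I" "0 \<notin> I" "J \<subseteq> I"
  shows "has_bochner_integral (yule_intervals I) (\<lambda>T. (\<Sum>i\<in>J. T i)\<^sup>2)
           ((\<Sum>i\<in>J. 1 / real i ^ 2) + (\<Sum>i\<in>J. 1 / real i)\<^sup>2)"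
proof -
  have "finite J" using assms finite_subset by blast
  have "(\<Sum>i\<in>J. 1 / real i ^ 2) + (\<Sum>i\<in>J. 1 / real i)\<^sup>2
      = (\<Sum>i\<in>J. \<Sum>j\<in>J. 1 / (real i * real j) + (if i = j then 1 / (real i * real j) else 0))"
    using \<open>finite J\<close> by (simp add: sum.distrib power2_eq_square sum_product)
  also have "\<dots> = (\<Sum>i\<in>J. \<Sum>j\<in>J. (if i = j then 2 else 1) / (real i * real j))"
    by (intro sum.cong refl) (simp add: add_divide_distrib)
  finally have moment_eq: "(\<Sum>i\<in>J. 1 / real i ^ 2) + (\<Sum>i\<in>J. 1 / real i)\<^sup>2
      = (\<Sum>i\<in>J. \<Sum>j\<in>J. (if i = j then 2 else 1) / (real i * real j))" .
  have "has_bochner_integral (yule_intervals I) (\<lambda>T. \<Sum>i\<in>J. \<Sum>j\<in>J. T i * T j)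
          (\<Sum>i\<in>J. \<Sum>j\<in>J. (if i = j then 2 else 1) / (real i * real j))"
    using assms by (intro has_bochner_integral_sum has_bochner_integral_yule_intervals_mult) auto
  then show ?thesis
    unfolding moment_eq by (simp add: power2_eq_square sum_product)
qed

lemma has_bochner_integral_pmf_of_set_pair:
  fixes f :: "'a \<times> 'b \<Rightarrow> real"
  assumes "finite A" "A \<noteq> {}" "sigma_finite_measure N"
    and "f \<in> borel_measurable (measure_pmf (pmf_of_set A) \<Otimes>\<^sub>M N)" "\<And>z. 0 \<le> f z"
    and "\<And>x. x \<in> A \<Longrightarrow> has_bochner_integral N (\<lambda>y. f (x, y)) (g x)"
  shows "has_bochner_integral (measure_pmf (pmf_of_set A) \<Otimes>\<^sub>M N) f ((\<Sum>x\<in>A. g x) / card A)"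
proof (rule has_bochner_integral_nn_integral)
  interpret N: sigma_finite_measure N by fact
  have g_nonneg: "0 \<le> g x" if "x \<in> A" for x
    using assms(5) has_bochner_integral_integral_eq[OF assms(6)[OF that]]
    by (metis integral_nonneg_AE AE_I2)
  have "(\<integral>\<^sup>+z. f z \<partial>(measure_pmf (pmf_of_set A) \<Otimes>\<^sub>M N))
      = (\<integral>\<^sup>+x. \<integral>\<^sup>+y. f (x, y) \<partial>N \<partial>measure_pmf (pmf_of_set A))"
    by (rule N.nn_integral_fst[symmetric]) (use assms(4) in measurable)
  also have "\<dots> = (\<Sum>x\<in>A. \<integral>\<^sup>+y. f (x, y) \<partial>N) / card A"
    by (rule nn_integral_pmf_of_set[OF assms(2,1)])
  also have "\<dots> = (\<Sum>x\<in>A. ennreal (g x)) / ennreal (real (card A))"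
    using assms(5,6)
    by (simp add: nn_integral_eq_integral has_bochner_integral_iff ennreal_of_nat_eq_real_of_nat)
  also have "\<dots> = ennreal ((\<Sum>x\<in>A. g x) / card A)"
    using assms(1,2) g_nonneg
    by (subst sum_ennreal) (auto simp: card_gt_0_iff intro!: divide_ennreal sum_nonneg)
  finally show "(\<integral>\<^sup>+z. f z \<partial>(measure_pmf (pmf_of_set A) \<Otimes>\<^sub>M N))
      = ennreal ((\<Sum>x\<in>A. g x) / card A)" .
  show "0 \<le> (\<Sum>x\<in>A. g x) / card A"
    using g_nonneg by (simp add: sum_nonneg)
qed (use assms in auto)

lemma has_bochner_integral_height_minus_coal_time_square:
  assumes "k \<le> n"
  shows "has_bochner_integral (yule_intervals {1..n})
           (\<lambda>T. (yule_height n T - coal_time n k T)\<^sup>2) (Hnr k 2 + (Hnr k 1)\<^sup>2)"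
proof -
  have "yule_height n T - coal_time n k T = (\<Sum>i\<in>{1..k}. T i)" for T
  proof -
    have "{1..n} = {1..k} \<union> {k<..n}" using assms by auto
    then show ?thesis
      unfolding yule_height_def coal_time_def by (simp add: sum.union_disjoint ivl_disj_int)
  qed
  then show ?thesis
    using has_bochner_integral_yule_intervals_sum_square[of "{1..n}" "{1..k}"] assms
    by (simp add: Hnr_def)
qed

lemma has_bochner_integral_yule_space_split_event:
  fixes h :: "nat \<Rightarrow> (nat \<Rightarrow> real) \<Rightarrow> real"
  assumes "n \<ge> 2"
    and "\<And>k. h k \<in> borel_measurable (yule_intervals {1..n})" "\<And>k T. 0 \<le> h k T"
    and "\<And>k. k \<le> n \<Longrightarrow> has_bochner_integral (yule_intervals {1..n}) (h k) (v k)"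
  shows "has_bochner_integral (yule_space n) (\<lambda>((c, (a, b)), T). h (split_event c a b) T)
           (split_event_sum n v / (real (card (yule_choices n)) * (real n * (real n - 1) / 2)))"
proof -
  define A where "A = yule_choices n \<times> tip_pairs n"
  define \<kappa> where "\<kappa> x = split_event (fst x) (fst (snd x)) (snd (snd x))"
    for x :: "(nat \<Rightarrow> nat) \<times> nat \<times> nat"
  let ?M = "measure_pmf (pmf_of_set A) \<Otimes>\<^sub>M yule_intervals {1..n}"
  have "(\<lambda>\<omega>. h k (snd \<omega>)) \<in> borel_measurable ?M" for k
    using assms(2) by measurable
  moreover have "(\<lambda>\<omega>. \<kappa> (fst \<omega>)) \<in> measurable ?M (count_space UNIV)"
    by (rule measurable_compose[OF measurable_fst])
       (simp add: measurable_cong_sets[OF sets_measure_pmf_count_space refl])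
  ultimately have measurable: "(\<lambda>\<omega>. h (\<kappa> (fst \<omega>)) (snd \<omega>)) \<in> borel_measurable ?M"
    by (rule measurable_compose_countable') simp
  have sections: "has_bochner_integral (yule_intervals {1..n}) (h (\<kappa> x)) (v (\<kappa> x))"
    if "x \<in> A" for x
    using that split_event_le[of "fst x" "fst (snd x)" "snd (snd x)"]
    by (intro assms(4)) (auto simp: A_def tip_pairs_def \<kappa>_def)
  have "has_bochner_integral ?M (\<lambda>\<omega>. h (\<kappa> (fst \<omega>)) (snd \<omega>)) ((\<Sum>x\<in>A. v (\<kappa> x)) / card A)"
  proof (rule has_bochner_integral_pmf_of_set_pair[where g = "\<lambda>x. v (\<kappa> x)"])
    show "finite A" by (simp add: A_def finite_yule_choices finite_tip_pairs)
    have "(0, 1) \<in> tip_pairs n" using assms by (simp add: tip_pairs_def)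
    then show "A \<noteq> {}" by (auto simp: A_def yule_choices_nonempty)
  qed (use measurable sections assms(3) in \<open>auto simp: exponential_product.sigma_finite\<close>)
  moreover have "(\<Sum>x\<in>A. v (\<kappa> x)) / card A
      = split_event_sum n v / (real (card (yule_choices n)) * (real n * (real n - 1) / 2))"
    by (simp add: A_def card_cartesian_product card_tip_pairs split_event_sum_def \<kappa>_def
                  sum.cartesian_product case_prod_unfold)
  ultimately show ?thesis
    unfolding yule_space_def A_def \<kappa>_def by (simp add: case_prod_unfold)
qed

theorem lemmaY4p1:
  fixes n :: nat
  assumes "n \<ge> 2"
  shows "(\<integral>\<omega>. (case \<omega> of ((c, (a, b)), T) \<Rightarrow>
            (yule_height n T - coal_time n (split_event c a b) T) ^ 2) \<partial>(yule_space n))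
         = (4 * real n + 2) / (real n - 1) * Hnr n 2
           - 2 * (Hnr n 1) ^ 2 / (real n - 1)
           - 4 * Hnr n 1 / (real n - 1)"
proof -
  let ?G = "\<lambda>k. Hnr k 2 + (Hnr k 1)\<^sup>2"
  have "(\<lambda>T. (yule_height n T - coal_time n k T)\<^sup>2) \<in> borel_measurable (yule_intervals {1..n})" for k
    unfolding yule_height_def coal_time_def by measurable
  then have "has_bochner_integral (yule_space n)
          (\<lambda>((c, (a, b)), T). (yule_height n T - coal_time n (split_event c a b) T)\<^sup>2)
          (split_event_sum n ?G / (real (card (yule_choices n)) * (real n * (real n - 1) / 2)))"
    using assms
    by (intro has_bochner_integral_yule_space_split_event
              has_bochner_integral_height_minus_coal_time_square) auto
  then have "(\<integral>\<omega>. (case \<omega> of ((c, (a, b)), T) \<Rightarrow>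
                (yule_height n T - coal_time n (split_event c a b) T) ^ 2) \<partial>(yule_space n))
      = split_event_sum n ?G / (real (card (yule_choices n)) * (real n * (real n - 1) / 2))"
    by (simp add: has_bochner_integral_integral_eq case_prod_unfold)
  also have "\<dots> = ((4 * real n + 2) * Hnr n 2 - 2 * (Hnr n 1)\<^sup>2 - 4 * Hnr n 1) / (real n - 1)"
  proof -
    have "real (card (yule_choices n)) > 0"
      using finite_yule_choices yule_choices_nonempty by (simp add: card_gt_0_iff)
    moreover have "n \<ge> 1" using assms by simp
    ultimately show ?thesis
      unfolding split_event_sum_harmonic[OF \<open>n \<ge> 1\<close>] using assms by (simp add: field_simps)
  qed
  finally show ?thesis
    by (simp add: diff_divide_distrib)
qed

end
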